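(* Let $F$ satisfy $2-\sqrt3\le F<2.4$, let $\varepsilon>0$, and consider $$P(X)=X^4-\varepsilon^2(1+F^2)X^2-2F\varepsilon X-1 .$$ Then there exists $\varepsilon_0>0$ (depending on $F$) such that for all $0<\varepsilon<\varepsilon_0$ the polynomial $P$ has exactly two real roots, a positive root $X_0^+$ and a negative root $X_0^-$, and they satisfy $$X_0^+-1\in(0,\varepsilon F),\qquad X_0^-+1\in(0,\varepsilon F).$$
   Context: This polynomial is the non-dimensional form of the dispersion relation $c^2(c^2k^2-f^2)=(c\hat f+\tilde g)^2$ for internal waves on the thermocline, via $X=c\sqrt{k/\tilde g}$, $\varepsilon=f/\sqrt{\tilde g k}$, $F=\hat f/f$, where $f=2\Omega\sin\phi$, $\hat f=2\Omega\cos\phi$ are the Coriolis parameters at latitude $\phi$, $k$ the wavenumber and $\tilde g$ the reduced gravity. The range $2-\sqrt3\le F<2.4$ corresponds to mid-latitudes (roughly $23^\circ26'16''$ to $75^\circ$), and the paper regards $\varepsilon$ as small (of order $10^{-2}$). *)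

theory Defs
  imports Complex_Main
begin

definition thermoP :: "real \<Rightarrow> real \<Rightarrow> real \<Rightarrow> real" where
  "thermoP F \<epsilon> X = X ^ 4 - \<epsilon>\<^sup>2 * (1 + F\<^sup>2) * X\<^sup>2 - 2 * F * \<epsilon> * X - 1"

end

theory Submission
  imports Defs
begin

text \<open>Write \<open>t = \<epsilon> F\<close> and \<open>a = \<epsilon>\<^sup>2 (1 + F\<^sup>2)\<close>, so that \<open>P(X) = X\<^sup>4 - a X\<^sup>2 - 2 t X - 1\<close>.
  For small \<open>\<epsilon>\<close> we have \<open>0 < a \<le> t < 1/8\<close>. Then \<open>P < 0\<close> on \<open>[-1/2, 1/2]\<close>, while
  the factorisation \<open>P(y) - P(x) = (y - x) ((x + y)(x\<^sup>2 + y\<^sup>2 - a) - 2 t)\<close> shows that \<open>P\<close> is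
  strictly increasing on \<open>[1/2, \<infinity>)\<close>; by the symmetry \<open>P\<^sub>F(-X) = P\<^sub>-\<^sub>F(X)\<close> it is strictly
  decreasing on \<open>(-\<infinity>, -1/2]\<close>. So there are at most two real roots, and the signs
  \<open>P(1) < 0 < P(1 + t)\<close> and \<open>P(-1) > 0 > P(-1 + t)\<close> locate one in each of \<open>(1, 1 + t)\<close> and
  \<open>(-1, -1 + t)\<close>.\<close>

lemma thermoP_minus: "thermoP F e (- X) = thermoP (- F) e X"
  unfolding thermoP_def by simp

lemma thermoP_diff:
  "thermoP F e y - thermoP F e x =
     (y - x) * ((x + y) * (x\<^sup>2 + y\<^sup>2 - e\<^sup>2 * (1 + F\<^sup>2)) - 2 * F * e)"
  unfolding thermoP_def by (simp add: algebra_simps power2_eq_square power4_eq_xxxx)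

lemma isCont_thermoP: "isCont (thermoP F e) X"
  unfolding thermoP_def by (intro continuous_intros)

lemma thermoP_strict_mono_on:
  fixes F e :: real
  assumes "e\<^sup>2 * (1 + F\<^sup>2) < 1/8" and "e * F < 1/8"
  shows "strict_mono_on {1/2..} (thermoP F e)"
proof (rule strict_mono_onI)
  fix x y :: real
  assume "x \<in> {1/2..}" "y \<in> {1/2..}" and "x < y"
  then have x: "1/2 \<le> x" and y: "1/2 \<le> y" by auto
  have "(1/2)\<^sup>2 \<le> x\<^sup>2" "(1/2)\<^sup>2 \<le> y\<^sup>2"
    using x y by (auto intro: power_mono)
  then have "1 * (3/8) \<le> (x + y) * (x\<^sup>2 + y\<^sup>2 - e\<^sup>2 * (1 + F\<^sup>2))"
    using x y assms(1) by (intro mult_mono) (auto simp: power2_eq_square)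
  moreover have "2 * F * e < 1/4"
    using assms(2) by (simp add: mult.commute)
  ultimately have "0 < (x + y) * (x\<^sup>2 + y\<^sup>2 - e\<^sup>2 * (1 + F\<^sup>2)) - 2 * F * e"
    by linarith
  with \<open>x < y\<close> have "0 < thermoP F e y - thermoP F e x"
    unfolding thermoP_diff by simp
  then show "thermoP F e x < thermoP F e y" by simp
qed

lemma thermoP_neg_if_abs_le_half:
  fixes F e X :: real
  assumes "\<bar>e * F\<bar> \<le> 1/2" and "\<bar>X\<bar> \<le> 1/2"
  shows "thermoP F e X < 0"
proof -
  have "X ^ 4 = \<bar>X\<bar> ^ 4" by (simp add: power_even_abs)
  also have "\<dots> \<le> (1/2) ^ 4" using assms(2) by (intro power_mono) auto
  finally have "X ^ 4 \<le> 1/16" by (simp add: power_divide)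
  moreover have "- (2 * F * e * X) \<le> 2 * \<bar>e * F\<bar> * \<bar>X\<bar>"
    using abs_ge_minus_self[of "2 * F * e * X"] by (simp add: abs_mult mult.commute)
  moreover have "2 * \<bar>e * F\<bar> * \<bar>X\<bar> \<le> 2 * (1/2) * (1/2)"
    using assms by (intro mult_mono) auto
  then have "2 * \<bar>e * F\<bar> * \<bar>X\<bar> \<le> 1/2" by simp
  moreover have "0 \<le> e\<^sup>2 * (1 + F\<^sup>2) * X\<^sup>2" by simp
  ultimately show ?thesis
    unfolding thermoP_def by linarith
qed

lemma thermoP_root_right_of_one:
  fixes F e :: real
  assumes "0 < e * F" and "e\<^sup>2 * (1 + F\<^sup>2) \<le> e * F"
  shows "\<exists>X. 1 < X \<and> X < 1 + e * F \<and> thermoP F e X = 0"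
proof -
  define t where "t = e * F"
  define a where "a = e\<^sup>2 * (1 + F\<^sup>2)"
  have t: "0 < t" and a: "0 \<le> a" "a \<le> t"
    using assms by (auto simp: t_def a_def)
  have P: "thermoP F e X = X ^ 4 - a * X\<^sup>2 - 2 * t * X - 1" for X
    unfolding thermoP_def a_def t_def by (simp add: mult_ac)
  have "thermoP F e 1 < 0"
    using t a by (simp add: P)
  moreover have "0 < thermoP F e (1 + t)"
  proof -
    have "a * (1 + t)\<^sup>2 \<le> t * (1 + t)\<^sup>2"
      using a by (intro mult_right_mono) auto
    moreover have "(1 + t) ^ 4 - t * (1 + t)\<^sup>2 - 2 * t * (1 + t) - 1 = t + 2 * t\<^sup>2 + 3 * t ^ 3 + t ^ 4"
      by (simp add: algebra_simps power2_eq_square power3_eq_cube power4_eq_xxxx)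
    moreover have "0 < t + 2 * t\<^sup>2 + 3 * t ^ 3 + t ^ 4"
      using t by (simp add: add_pos_nonneg)
    ultimately show ?thesis
      by (simp add: P)
  qed
  ultimately obtain X where "1 \<le> X" "X \<le> 1 + t" "thermoP F e X = 0"
    using IVT[of "thermoP F e" 1 0 "1 + t"] t isCont_thermoP by auto
  with \<open>thermoP F e 1 < 0\<close> \<open>0 < thermoP F e (1 + t)\<close> show ?thesis
    unfolding t_def by (intro exI[of _ X]) (auto simp: order.order_iff_strict)
qed

lemma thermoP_root_right_of_minus_one:
  fixes F e :: real
  assumes "0 < e * F" "e * F \<le> 1/2" and "e\<^sup>2 * (1 + F\<^sup>2) \<le> e * F"
  shows "\<exists>X. -1 < X \<and> X < -1 + e * F \<and> thermoP F e X = 0"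
proof -
  define t where "t = e * F"
  define a where "a = e\<^sup>2 * (1 + F\<^sup>2)"
  have t: "0 < t" "t \<le> 1/2" and a: "0 \<le> a" "a \<le> t"
    using assms by (auto simp: t_def a_def)
  have P: "thermoP F e X = X ^ 4 - a * X\<^sup>2 - 2 * t * X - 1" for X
    unfolding thermoP_def a_def t_def by (simp add: mult_ac)
  have "0 < thermoP F e (-1)"
    using t a by (simp add: P)
  moreover have "thermoP F e (-1 + t) < 0"
  proof -
    have "(-1 + t) ^ 4 - 2 * t * (-1 + t) - 1 = t * (-2 + 4 * t - 4 * t\<^sup>2 + t ^ 3)"
      by (simp add: algebra_simps power2_eq_square power3_eq_cube power4_eq_xxxx)
    moreover have "t ^ 3 < 4 * t\<^sup>2"
      using t by (simp add: power2_eq_square power3_eq_cube)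
    then have "t * (-2 + 4 * t - 4 * t\<^sup>2 + t ^ 3) < 0"
      using t by (intro mult_pos_neg) auto
    moreover have "0 \<le> a * (-1 + t)\<^sup>2"
      using a by simp
    ultimately show ?thesis
      by (simp add: P)
  qed
  ultimately obtain X where "-1 \<le> X" "X \<le> -1 + t" "thermoP F e X = 0"
    using IVT2[of "thermoP F e" "-1 + t" 0 "-1"] t isCont_thermoP by auto
  with \<open>0 < thermoP F e (-1)\<close> \<open>thermoP F e (-1 + t) < 0\<close> show ?thesis
    unfolding t_def by (intro exI[of _ X]) (auto simp: order.order_iff_strict)
qed

lemma thermoP_roots:
  fixes F e :: real
  assumes "0 < e * F" "e * F < 1/8" and "e\<^sup>2 * (1 + F\<^sup>2) \<le> e * F"
  shows "\<exists>Xp Xm. {X. thermoP F e X = 0} = {Xp, Xm} \<and>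
           1 < Xp \<and> Xp < 1 + e * F \<and> -1 < Xm \<and> Xm < -1 + e * F"
proof -
  obtain Xp where Xp: "1 < Xp" "Xp < 1 + e * F" "thermoP F e Xp = 0"
    using thermoP_root_right_of_one assms by blast
  obtain Xm where Xm: "-1 < Xm" "Xm < -1 + e * F" "thermoP F e Xm = 0"
    using thermoP_root_right_of_minus_one assms by force
  have a: "e\<^sup>2 * (1 + F\<^sup>2) < 1/8"
    using assms by linarith
  have mono: "strict_mono_on {1/2..} (thermoP F e)"
    using a assms(2) by (rule thermoP_strict_mono_on)
  have mono_reflected: "strict_mono_on {1/2..} (thermoP (-F) e)"
    using a assms(1) by (intro thermoP_strict_mono_on) auto
  have "X = Xp \<or> X = Xm" if root: "thermoP F e X = 0" for X
  proof -
    consider "1/2 \<le> X" | "\<bar>X\<bar> \<le> 1/2" | "X \<le> -1/2"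
      by linarith
    then show ?thesis
    proof cases
      case 1
      then show ?thesis
        using strict_mono_on_eqD[OF mono, of X Xp] root Xp by auto
    next
      case 2
      then show ?thesis
        using thermoP_neg_if_abs_le_half[of e F X] root assms by auto
    next
      case 3
      then have "- X = - Xm"
        using strict_mono_on_eqD[OF mono_reflected, of "- Xm" "- X"] root Xm assms(2)
        by (auto simp: thermoP_minus[symmetric])
      then show ?thesis by simp
    qed
  qed
  then have "{X. thermoP F e X = 0} = {Xp, Xm}"
    using Xp Xm by auto
  with Xp Xm show ?thesis by blast
qed

theorem mainTheorem2:
  fixes F :: real
  assumes "2 - sqrt 3 \<le> F" and "F < 2.4"
  shows "\<exists>\<epsilon>0 > 0. \<forall>\<epsilon>. 0 < \<epsilon> \<and> \<epsilon> < \<epsilon>0 \<longrightarrow>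
           (\<exists>Xp Xm. {X. thermoP F \<epsilon> X = 0} = {Xp, Xm} \<and> Xp > 0 \<and> Xm < 0 \<and>
              Xp - 1 \<in> {0<..<\<epsilon> * F} \<and> Xm + 1 \<in> {0<..<\<epsilon> * F})"
proof -
  have "sqrt 3 < 2"
    by (rule real_less_lsqrt) auto
  with assms(1) have F: "0 < F" by simp
  define \<epsilon>0 where "\<epsilon>0 = min (1 / (8 * F)) (F / (1 + F\<^sup>2))"
  have "0 < \<epsilon>0"
    unfolding \<epsilon>0_def using F by (simp add: add_pos_nonneg)
  moreover have "\<exists>Xp Xm. {X. thermoP F e X = 0} = {Xp, Xm} \<and> Xp > 0 \<and> Xm < 0 \<and>
                   Xp - 1 \<in> {0<..<e * F} \<and> Xm + 1 \<in> {0<..<e * F}"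
    if e: "0 < e" "e < \<epsilon>0" for e
  proof -
    have "e * F < 1/8"
      using e F by (simp add: \<epsilon>0_def field_simps)
    moreover have "e * (1 + F\<^sup>2) < F"
      using e by (simp add: \<epsilon>0_def field_simps add_pos_nonneg)
    then have "e\<^sup>2 * (1 + F\<^sup>2) \<le> e * F"
      using e by (simp add: power2_eq_square)
    ultimately show ?thesis
      using thermoP_roots[of e F] e F by fastforce
  qed
  ultimately show ?thesis by blast
qed

end
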